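(* Let $0<a<1$, $0<p<1$, let $x^\ast>0$ be the solution of $P(a,x)=p$, and let $x_0$ be any number with $0<x_0\le x^\ast$ (for instance $x_0=(p\,\Gamma(a+1))^{1/a}$). Define the Newton iterates $$x_{n+1}=x_n-\frac{P(a,x_n)-p}{\partial_x P(a,x_n)},\qquad n\ge0.$$ Then $(x_n)$ is nondecreasing, satisfies $x_n\le x^\ast$ for all $n$, and converges to $x^\ast$.
   Context: $P(a,x)=\frac{1}{\Gamma(a)}\int_0^x t^{a-1}e^{-t}\,dt$ for $a>0$, $x>0$, so $\partial_xP(a,x)=x^{a-1}e^{-x}/\Gamma(a)$. *)

theory Defs
  imports "HOL-Analysis.Analysis"
begin

definition regP :: "real \<Rightarrow> real \<Rightarrow> real" where
  "regP a x = integral {0..x} (\<lambda>t. t powr (a - 1) * exp (- t)) / Gamma a"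

definition regP_dx :: "real \<Rightarrow> real \<Rightarrow> real" where
  "regP_dx a x = x powr (a - 1) * exp (- x) / Gamma a"

end

theory Submission
  imports Defs
begin

text \<open>Write \<open>g t = t powr (a - 1) * exp (- t)\<close>, so that \<open>P(a,\<cdot>)\<close> has derivative \<open>g / \<Gamma>(a)\<close>.
  For \<open>a \<le> 1\<close> the integrand \<open>g\<close> is decreasing, hence for \<open>0 < y \<le> x\<^sup>*\<close>
  \<open>g x\<^sup>* (x\<^sup>* - y) \<le> \<Gamma>(a) (P(a,x\<^sup>*) - P(a,y)) \<le> g y (x\<^sup>* - y)\<close>.
  The right inequality says the Newton step from \<open>y\<close> does not overshoot \<open>x\<^sup>*\<close>, the left one
  that it removes at least the fraction \<open>g x\<^sup>* / g y \<ge> g x\<^sup>* / g x\<^sub>0\<close> of the gap \<open>x\<^sup>* - y\<close>.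
  So the iterates increase and the gap shrinks geometrically.\<close>

lemma gamma_integrand_integrable_on:
  assumes "0 < a" "0 \<le> c"
  shows "(\<lambda>t::real. t powr (a - 1) * exp (- t)) integrable_on {0..c}"
proof (rule measurable_bounded_by_integrable_imp_integrable_real)
  show "(\<lambda>t::real. t powr (a - 1) * exp (- t)) \<in> borel_measurable (lebesgue_on {0..c})"
    by (intro measurable_restrict_space1 measurable_completion) (simp, measurable)
  show "(\<lambda>t. t powr (a - 1)) integrable_on {0..c}"
    using integrable_on_powr_from_0[of "a - 1" c] assms by simp
  show "{0..c} \<in> sets lebesgue" by simp
  fix t :: real assume "t \<in> {0..c}"
  then show "\<bar>t powr (a - 1) * exp (- t)\<bar> \<le> t powr (a - 1)"
    using mult_left_mono[of "exp (- t)" 1 "t powr (a - 1)"] by simp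
qed

lemma gamma_integrand_antimono:
  assumes "a \<le> 1" "0 < s" "s \<le> t"
  shows "t powr (a - 1) * exp (- t) \<le> s powr (a - 1) * exp (- (s::real))"
  using assms by (intro mult_mono powr_mono2') auto

lemma regP_dx_pos: "0 < a \<Longrightarrow> 0 < x \<Longrightarrow> 0 < regP_dx a x"
  by (simp add: regP_dx_def)

lemma regP_dx_antimono:
  assumes "0 < a" "a \<le> 1" "0 < s" "s \<le> t"
  shows "regP_dx a t \<le> regP_dx a s"
  unfolding regP_dx_def using gamma_integrand_antimono[OF assms(2-4)] assms(1)
  by (simp add: divide_right_mono)

lemma integral_bounds_antimono_real:
  fixes f :: "real \<Rightarrow> real"
  assumes "f integrable_on {u..v}" "u \<le> v" "\<And>t. t \<in> {u..v} \<Longrightarrow> f v \<le> f t \<and> f t \<le> f u"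
  shows "f v * (v - u) \<le> integral {u..v} f" "integral {u..v} f \<le> f u * (v - u)"
proof -
  have "integral {u..v} (\<lambda>_. f v) \<le> integral {u..v} f"
    by (rule integral_le) (use assms in auto)
  then show "f v * (v - u) \<le> integral {u..v} f" using assms(2) by (simp add: mult.commute)
  have "integral {u..v} f \<le> integral {u..v} (\<lambda>_. f u)"
    by (rule integral_le) (use assms in auto)
  then show "integral {u..v} f \<le> f u * (v - u)" using assms(2) by (simp add: mult.commute)
qed

lemma regP_diff_bounds:
  assumes "0 < a" "a \<le> 1" "0 < u" "u \<le> v"
  shows "regP_dx a v * (v - u) \<le> regP a v - regP a u"
    and "regP a v - regP a u \<le> regP_dx a u * (v - u)"
proof -
  define g where "g = (\<lambda>t::real. t powr (a - 1) * exp (- t))"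
  have int_0v: "g integrable_on {0..v}"
    unfolding g_def using gamma_integrand_integrable_on assms by auto
  have "integral {0..v} g = integral {0..u} g + integral {u..v} g"
    using Henstock_Kurzweil_Integration.integral_combine[OF _ _ int_0v, of u] assms by auto
  then have diff: "regP a v - regP a u = integral {u..v} g / Gamma a"
    unfolding regP_def g_def by (simp add: add_divide_distrib)
  have antimono: "g v \<le> g t \<and> g t \<le> g u" if "t \<in> {u..v}" for t
    unfolding g_def using gamma_integrand_antimono[OF assms(2)] assms that by auto
  have bounds: "g v * (v - u) \<le> integral {u..v} g" "integral {u..v} g \<le> g u * (v - u)"
    using integral_bounds_antimono_real[OF integrable_subinterval_real[OF int_0v] assms(4) antimono]
      assms(3) by auto
  have "Gamma a > 0" using assms(1) by simp
  moreover have "regP_dx a t = g t / Gamma a" for t unfolding regP_dx_def g_def by simp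
  ultimately show "regP_dx a v * (v - u) \<le> regP a v - regP a u"
    and "regP a v - regP a u \<le> regP_dx a u * (v - u)"
    using divide_right_mono[OF bounds(1), of "Gamma a"] divide_right_mono[OF bounds(2), of "Gamma a"]
    unfolding diff by simp_all
qed

lemma regP_newton_step:
  assumes "0 < a" "a \<le> 1" "0 < w" "w \<le> y" "y \<le> z"
  defines "y' \<equiv> y - (regP a y - regP a z) / regP_dx a y"
  shows "y \<le> y'" "y' \<le> z" "z - y' \<le> (1 - regP_dx a z / regP_dx a w) * (z - y)"
proof -
  have "0 < y" using assms(3,4) by linarith
  have dy: "regP_dx a y > 0" using regP_dx_pos assms(1) \<open>0 < y\<close> by simp
  have dz: "regP_dx a z > 0" using regP_dx_pos assms(1,5) \<open>0 < y\<close> by simp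
  have "regP_dx a y \<le> regP_dx a w" using regP_dx_antimono assms by simp
  then have ratio: "regP_dx a z / regP_dx a w \<le> regP_dx a z / regP_dx a y"
    using dy dz by (intro divide_left_mono mult_pos_pos) auto
  define q where "q = (regP a z - regP a y) / regP_dx a y"
  have y': "y' = y + q" unfolding y'_def q_def by (simp add: diff_divide_distrib)
  have "regP_dx a z / regP_dx a y * (z - y) \<le> q"
    using regP_diff_bounds(1)[OF assms(1,2) \<open>0 < y\<close> assms(5)] dy
    unfolding q_def by (simp add: divide_right_mono)
  moreover have "0 \<le> regP_dx a z / regP_dx a w * (z - y)"
    using regP_dx_pos assms by (simp add: less_imp_le)
  moreover have "regP_dx a z / regP_dx a w * (z - y) \<le> regP_dx a z / regP_dx a y * (z - y)"
    using ratio assms(5) by (intro mult_right_mono) simp_all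
  moreover have "q \<le> z - y"
    using regP_diff_bounds(2)[OF assms(1,2) \<open>0 < y\<close> assms(5)] dy
    unfolding q_def by (simp add: field_simps)
  ultimately show "y \<le> y'" "y' \<le> z" "z - y' \<le> (1 - regP_dx a z / regP_dx a w) * (z - y)"
    unfolding y' by (simp_all add: algebra_simps)
qed

lemma LIMSEQ_of_geometric_gap:
  fixes x :: "nat \<Rightarrow> real"
  assumes "0 \<le> q" "q < 1" "\<And>n. x n \<le> L" "\<And>n. L - x (Suc n) \<le> q * (L - x n)"
  shows "x \<longlonglongrightarrow> L"
proof -
  have gap: "L - x n \<le> q ^ n * (L - x 0)" for n
  proof (induction n)
    case (Suc n)
    have "L - x (Suc n) \<le> q * (L - x n)" by (rule assms(4))
    also have "\<dots> \<le> q * (q ^ n * (L - x 0))" using Suc assms(1) by (rule mult_left_mono)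
    finally show ?case by simp
  qed simp
  have bound_to_zero: "(\<lambda>n. q ^ n * (L - x 0)) \<longlonglongrightarrow> 0"
    using LIMSEQ_power_zero[of q] assms(1,2) by (simp add: tendsto_mult_left_zero)
  have "(\<lambda>n. L - x n) \<longlonglongrightarrow> 0"
    by (rule tendsto_sandwich[OF _ _ tendsto_const bound_to_zero]) (use gap assms(3) in auto)
  then show ?thesis
    using tendsto_diff[OF tendsto_const, of "\<lambda>n. L - x n" 0 sequentially L] by simp
qed

theorem mainTheorem4:
  fixes a p xstar :: real and x :: "nat \<Rightarrow> real"
  assumes "0 < a" "a < 1" "0 < p" "p < 1"
    and "0 < xstar" "regP a xstar = p"
    and "0 < x 0" "x 0 \<le> xstar"
    and "\<And>n. x (Suc n) = x n - (regP a (x n) - p) / regP_dx a (x n)"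
  shows "mono x \<and> (\<forall>n. x n \<le> xstar) \<and> x \<longlonglongrightarrow> xstar"
proof -
  have step: "x n \<le> x (Suc n)" "x (Suc n) \<le> xstar"
      "xstar - x (Suc n) \<le> (1 - regP_dx a xstar / regP_dx a (x 0)) * (xstar - x n)"
    if "x 0 \<le> x n" "x n \<le> xstar" for n
    using regP_newton_step[OF assms(1) less_imp_le[OF assms(2)] assms(7) that]
    unfolding assms(6) assms(9)[of n, symmetric] by auto
  have bracket: "x 0 \<le> x n \<and> x n \<le> xstar" for n
    by (induction n) (use assms(8) step(1,2) in \<open>fastforce intro: order_trans\<close>)+
  define c where "c = regP_dx a xstar / regP_dx a (x 0)"
  have "0 < c" "c \<le> 1"
    unfolding c_def using regP_dx_pos regP_dx_antimono assms(1,2,5,7,8) by simp_all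
  have "mono x"
    using step(1) bracket by (intro incseq_SucI) blast
  moreover have "x \<longlonglongrightarrow> xstar"
    using LIMSEQ_of_geometric_gap[of "1 - c"] \<open>0 < c\<close> \<open>c \<le> 1\<close> step(3) bracket
    unfolding c_def by auto
  ultimately show ?thesis using bracket by blast
qed

end
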